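(* For every $d\ge 2$ there exists a constant $C$ such that for all $n\ge 2$ and all integers $k\ge 0$ the following holds: in a regular $d$-dimensional toroidal grid $(\mathbb{Z}/N\mathbb{Z})^d$ with $N^d\le n$ vertices, the number of subsets of size $k$ that have at most $\frac{k}{\log n}$ *-connected components is at most $C^k$.
   Context: Two vertices of the toroidal grid $(\mathbb{Z}/N\mathbb{Z})^d$ are *-adjacent if they are distinct and their $\ell_\infty$-distance (in the discrete torus) is at most $1$; *-connected components of a subset are its connected components with respect to *-adjacency. $\log$ is the natural logarithm. *)

theory Defs
  imports Complex_Main
begin

definition torus :: "nat \<Rightarrow> nat \<Rightarrow> nat list set" where
  "torus N d = {x. length x = d \<and> (\<forall>i<d. x ! i < N)}"

definition cyc_dist :: "nat \<Rightarrow> nat \<Rightarrow> nat \<Rightarrow> nat" where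
  "cyc_dist N a b = min (if a \<le> b then b - a else a - b) (N - (if a \<le> b then b - a else a - b))"

definition star_adj :: "nat \<Rightarrow> nat \<Rightarrow> nat list \<Rightarrow> nat list \<Rightarrow> bool" where
  "star_adj N d x y \<longleftrightarrow> x \<noteq> y \<and> (\<forall>i<d. cyc_dist N (x ! i) (y ! i) \<le> 1)"

definition star_components :: "nat \<Rightarrow> nat \<Rightarrow> nat list set \<Rightarrow> nat list set set" where
  "star_components N d S = S // ({(x, y). x \<in> S \<and> y \<in> S \<and> star_adj N d x y}\<^sup>*)"

end

theory Submission
  imports Defs
begin

(* Every *-component K of a set S is traversed by a walk of at most 2|K| - 2 *-moves that
   starts at a root of K and visits exactly K (a depth-first walk: each new vertex costs a
   detour there and back). Recording one root per component and the concatenated walks, each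
   preceded by a jump letter, encodes S by at most L roots among the N^d vertices and a word of
   length 2|S| over the 3^d moves plus two letters (jump, padding). Hence at most
   (N^d)^L (3^d + 2)^(2k) sets of size k have at most L components, and for
   L = floor (k / log n) and N^d <= n the first factor is at most n^(k / log n) = e^k. *)

definition edges_on :: "'a set \<Rightarrow> ('a \<Rightarrow> 'a \<Rightarrow> bool) \<Rightarrow> ('a \<times> 'a) set" where
  "edges_on S E = {(x, y). x \<in> S \<and> y \<in> S \<and> E x y}"

lemma rtrancl_edges_on_subset: "r \<in> S \<Longrightarrow> (edges_on S E)\<^sup>* `` {r} \<subseteq> S"
proof
  fix z assume "r \<in> S" "z \<in> (edges_on S E)\<^sup>* `` {r}"
  then have "(r, z) \<in> (edges_on S E)\<^sup>*" by simp
  then show "z \<in> S" using \<open>r \<in> S\<close> by induction (auto simp: edges_on_def)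
qed

lemma equiv_rtrancl_edges_on:
  assumes "\<And>x y. E x y \<Longrightarrow> E y x"
  shows "equiv S (Restr ((edges_on S E)\<^sup>*) S)"
proof -
  have "sym ((edges_on S E)\<^sup>*)"
    by (rule sym_rtrancl) (auto simp: sym_def edges_on_def assms)
  then show ?thesis
    by (auto simp: equiv_def refl_on_def sym_def trans_def intro: rtrancl_trans)
qed

(* The reflexive transitive closure is reflexive on the whole type, so only its restriction
   to S is an equivalence relation on S. *)
lemma quotient_rtrancl_edges_on: "S // (edges_on S E)\<^sup>* = S // (Restr ((edges_on S E)\<^sup>*) S)"
  using rtrancl_edges_on_subset[of _ S E] by (auto simp: quotient_def)

lemma card_eq_sum_card_components:
  assumes "finite S" "\<And>x y. E x y \<Longrightarrow> E y x"
  shows "card S = (\<Sum>K \<in> S // (edges_on S E)\<^sup>*. card K)"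
proof -
  have equiv: "equiv S (Restr ((edges_on S E)\<^sup>*) S)"
    using assms(2) by (rule equiv_rtrancl_edges_on)
  have "card (\<Union> (S // (edges_on S E)\<^sup>*)) = (\<Sum>K \<in> S // (edges_on S E)\<^sup>*. card K)"
    unfolding quotient_rtrancl_edges_on
    by (rule card_Union_disjoint)
       (auto simp: pairwise_def disjnt_def dest: quotient_disj[OF equiv]
             intro: finite_subset[OF in_quotient_imp_subset[OF equiv] assms(1)])
  then show ?thesis
    unfolding quotient_rtrancl_edges_on Union_quotient[OF equiv] .
qed

lemma rtrancl_exits_set:
  assumes "(r, z) \<in> R\<^sup>*" "r \<in> T" "z \<notin> T"
  shows "\<exists>y x. y \<in> T \<and> x \<notin> T \<and> (y, x) \<in> R \<and> (r, x) \<in> R\<^sup>*"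
  using assms by induction (auto intro: rtrancl_into_rtrancl)

(* Insert the detour y, x, y at an occurrence of a visited vertex y adjacent to an unvisited x. *)
lemma walk_add_detour:
  assumes sym: "\<And>x y. E x y \<Longrightarrow> E y x"
    and walk: "successively E (r # ws)" "set (r # ws) \<subseteq> K" "set (r # ws) \<noteq> K"
    and K: "K = (edges_on S E)\<^sup>* `` {r}"
  shows "\<exists>ws'. successively E (r # ws') \<and> length ws' = length ws + 2 \<and>
           (\<exists>x \<in> K - set (r # ws). set (r # ws') = insert x (set (r # ws)))"
proof -
  obtain z where "z \<in> K" "z \<notin> set (r # ws)" using walk(2,3) by blast
  then obtain y x where yx: "y \<in> set (r # ws)" "x \<notin> set (r # ws)"
      "(y, x) \<in> edges_on S E" "(r, x) \<in> (edges_on S E)\<^sup>*"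
    using rtrancl_exits_set[of r z "edges_on S E" "set (r # ws)"] K by auto
  then have "E y x" "E x y" using sym by (auto simp: edges_on_def)
  obtain us vs where split: "r # ws = us @ y # vs" using yx(1) split_list by metis
  define ws' where "ws' = tl (us @ y # x # y # vs)"
  have walk': "r # ws' = us @ y # x # y # vs"
    using split by (cases us) (auto simp: ws'_def)
  have "successively E (r # ws')"
    using walk(1) \<open>E y x\<close> \<open>E x y\<close> unfolding walk' split
    by (auto simp: successively_append_iff)
  moreover have "length ws' = length ws + 2"
    using arg_cong[OF split, of length] by (simp add: ws'_def)
  moreover have "set (r # ws') = insert x (set (r # ws))"
    unfolding walk' split by auto
  moreover have "x \<in> K - set (r # ws)" using yx K by auto
  ultimately show ?thesis by blast
qed

lemma covering_walk_exists:
  assumes "finite S" "\<And>x y. E x y \<Longrightarrow> E y x" "r \<in> S"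
  defines "K \<equiv> (edges_on S E)\<^sup>* `` {r}"
  shows "\<exists>ws. successively E (r # ws) \<and> set (r # ws) = K \<and> length ws \<le> 2 * (card K - 1)"
proof -
  have "finite K" unfolding K_def
    using assms(1) rtrancl_edges_on_subset[OF assms(3)] by (rule rev_finite_subset)
  have partial_walk: "\<exists>ws. successively E (r # ws) \<and> set (r # ws) \<subseteq> K \<and>
      card (set (r # ws)) = Suc j \<and> length ws \<le> 2 * j" if "Suc j \<le> card K" for j
    using that
  proof (induction j)
    case 0
    then show ?case by (intro exI[of _ "[]"]) (simp add: K_def)
  next
    case (Suc j)
    then obtain ws where ws: "successively E (r # ws)" "set (r # ws) \<subseteq> K"
        "card (set (r # ws)) = Suc j" "length ws \<le> 2 * j"
      by auto
    then have "set (r # ws) \<noteq> K" using Suc.prems by auto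
    then obtain ws' x where "successively E (r # ws')" "length ws' = length ws + 2"
        "x \<in> K - set (r # ws)" "set (r # ws') = insert x (set (r # ws))"
      using walk_add_detour[of E r ws, OF assms(2) ws(1,2)] K_def by blast
    then show ?case using ws by (intro exI[of _ ws']) auto
  qed
  have "card K \<noteq> 0" using \<open>finite K\<close> by (auto simp: K_def)
  then obtain ws where "successively E (r # ws)" "set (r # ws) \<subseteq> K"
      "card (set (r # ws)) = card K" "length ws \<le> 2 * (card K - 1)"
    using partial_walk[of "card K - 1"] by auto
  then show ?thesis using card_subset_eq[OF \<open>finite K\<close>] by blast
qed

(* Skip only pads codes to a common length. *)
datatype 'b instr = Skip | Jump | Move 'b

definition instrs :: "'b set \<Rightarrow> 'b instr set" where
  "instrs D = {Skip, Jump} \<union> Move ` D"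

lemma card_instrs: "finite D \<Longrightarrow> card (instrs D) = card D + 2"
  by (simp add: instrs_def card_image inj_on_def image_iff)

lemma finite_instrs: "finite D \<Longrightarrow> finite (instrs D)"
  by (simp add: instrs_def)

fun visits :: "('a \<Rightarrow> 'b \<Rightarrow> 'a) \<Rightarrow> 'a \<Rightarrow> 'b list \<Rightarrow> 'a set" where
  "visits nb x [] = {}"
| "visits nb x (b # bs) = insert (nb x b) (visits nb (nb x b) bs)"

fun run :: "('a \<Rightarrow> 'b \<Rightarrow> 'a) \<Rightarrow> 'a \<Rightarrow> 'a list \<Rightarrow> 'b instr list \<Rightarrow> 'a set" where
  "run nb x rs [] = {}"
| "run nb x rs (Skip # is) = run nb x rs is"
| "run nb x [] (Jump # is) = run nb x [] is"
| "run nb x (r # rs) (Jump # is) = insert r (run nb r rs is)"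
| "run nb x rs (Move b # is) = insert (nb x b) (run nb (nb x b) rs is)"

lemma run_replicate_Skip: "run nb x rs (replicate j Skip) = {}"
  by (induction j) auto

lemma run_append_Skips: "run nb x rs (is @ replicate j Skip) = run nb x rs is"
  by (induction nb x rs "is" rule: run.induct) (simp_all add: run_replicate_Skip)

lemma run_append_roots: "count_list is Jump \<le> length rs \<Longrightarrow> run nb x (rs @ rs') is = run nb x rs is"
  by (induction nb x rs "is" rule: run.induct) auto

lemma run_Moves: "run nb x rs (map Move bs @ is) = visits nb x bs \<union> run nb (foldl nb x bs) rs is"
  by (induction bs arbitrary: x) auto

definition walk_codes :: "('a \<times> 'b list) list \<Rightarrow> 'b instr list" where
  "walk_codes cs = concat (map (\<lambda>(r, bs). Jump # map Move bs) cs)"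

lemma run_walk_codes:
  "run nb x (map fst cs) (walk_codes cs) = (\<Union>(r, bs) \<in> set cs. insert r (visits nb r bs))"
  by (induction cs arbitrary: x) (auto simp: walk_codes_def run_Moves split_def)

lemma count_Jump_walk_codes: "count_list (walk_codes cs) Jump = length cs"
  by (induction cs) (auto simp: walk_codes_def split_def count_list_0_iff)

lemma length_walk_codes: "length (walk_codes cs) = (\<Sum>(r, bs) \<leftarrow> cs. Suc (length bs))"
  by (induction cs) (auto simp: walk_codes_def)

lemma set_walk_codes_subset:
  "\<forall>(r, bs) \<in> set cs. set bs \<subseteq> D \<Longrightarrow> set (walk_codes cs) \<subseteq> instrs D"
  by (induction cs) (auto simp: walk_codes_def instrs_def)

lemma walk_moves_exist:
  assumes "successively E (x # ws)" "set (x # ws) \<subseteq> S"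
    and step: "\<And>x y. x \<in> S \<Longrightarrow> y \<in> S \<Longrightarrow> E x y \<Longrightarrow> \<exists>b \<in> D. nb x b = y"
  shows "\<exists>bs. set bs \<subseteq> D \<and> length bs = length ws \<and> visits nb x bs = set ws"
  using assms(1,2)
proof (induction ws arbitrary: x)
  case (Cons y ws)
  then obtain b where "b \<in> D" "nb x b = y" using step by force
  moreover obtain bs where "set bs \<subseteq> D" "length bs = length ws" "visits nb y bs = set ws"
    using Cons by force
  ultimately show ?case by (intro exI[of _ "b # bs"]) auto
qed simp

lemma component_code_exists:
  assumes "finite S" "\<And>x y. E x y \<Longrightarrow> E y x" "K \<in> S // (edges_on S E)\<^sup>*"
    and step: "\<And>x y. x \<in> S \<Longrightarrow> y \<in> S \<Longrightarrow> E x y \<Longrightarrow> \<exists>b \<in> D. nb x b = y"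
  shows "\<exists>r bs. r \<in> S \<and> set bs \<subseteq> D \<and> length bs < 2 * card K \<and> insert r (visits nb r bs) = K"
proof -
  obtain r where r: "r \<in> S" "K = (edges_on S E)\<^sup>* `` {r}"
    using assms(3) by (auto simp: quotient_def)
  obtain ws where ws: "successively E (r # ws)" "set (r # ws) = K" "length ws \<le> 2 * (card K - 1)"
    using covering_walk_exists[of S E r, OF assms(1,2) r(1)] unfolding r(2) by blast
  have "K \<subseteq> S" unfolding r(2) using r(1) by (rule rtrancl_edges_on_subset)
  then have "set (r # ws) \<subseteq> S" using ws(2) by simp
  then obtain bs where "set bs \<subseteq> D" "length bs = length ws" "visits nb r bs = set ws"
    using walk_moves_exist[of E r ws S D nb, OF ws(1) _ step] by blast
  moreover have "card K > 0"
    using finite_subset[OF \<open>K \<subseteq> S\<close> assms(1)] ws(2) by (auto simp: card_gt_0_iff)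
  ultimately show ?thesis using ws r(1) by (intro exI[of _ r] exI[of _ bs]) auto
qed

lemma set_code_exists:
  assumes fin: "finite S" and sym: "\<And>x y. E x y \<Longrightarrow> E y x"
    and step: "\<And>x y. x \<in> S \<Longrightarrow> y \<in> S \<Longrightarrow> E x y \<Longrightarrow> \<exists>b \<in> D. nb x b = y"
  shows "\<exists>rs is. length rs = card (S // (edges_on S E)\<^sup>*) \<and> count_list is Jump = length rs \<and>
           length is \<le> 2 * card S \<and> set rs \<subseteq> S \<and> set is \<subseteq> instrs D \<and> run nb x rs is = S"
proof -
  define P where "P = S // (edges_on S E)\<^sup>*"
  have equiv: "equiv S (Restr ((edges_on S E)\<^sup>*) S)"
    using sym by (rule equiv_rtrancl_edges_on)
  have "\<forall>K \<in> P. \<exists>c. fst c \<in> S \<and> set (snd c) \<subseteq> D \<and> length (snd c) < 2 * card K \<and>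
            insert (fst c) (visits nb (fst c) (snd c)) = K"
    using component_code_exists[of S E _ D nb, OF fin sym _ step] by (simp add: P_def split_paired_Ex)
  from bchoice[OF this] obtain c where c: "\<forall>K \<in> P. fst (c K) \<in> S \<and> set (snd (c K)) \<subseteq> D \<and>
      length (snd (c K)) < 2 * card K \<and> insert (fst (c K)) (visits nb (fst (c K)) (snd (c K))) = K"
    ..
  have "finite P" unfolding P_def quotient_rtrancl_edges_on using fin
    by (rule finite_quotient) auto
  then obtain ks where ks: "set ks = P" "distinct ks" using finite_distinct_list by blast
  define cs where "cs = map c ks"
  have "length (walk_codes cs) = (\<Sum>K \<leftarrow> ks. Suc (length (snd (c K))))"
    by (simp add: length_walk_codes cs_def o_def split_def)
  also have "\<dots> \<le> (\<Sum>K \<leftarrow> ks. 2 * card K)"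
    using c ks(1) by (intro sum_list_mono) (simp add: Suc_le_eq)
  also have "\<dots> = 2 * card S"
    using card_eq_sum_card_components[of S E, OF fin sym] ks
    by (simp add: sum_list_distinct_conv_sum_set P_def sum_distrib_left)
  finally have "length (walk_codes cs) \<le> 2 * card S" .
  moreover have "run nb x (map fst cs) (walk_codes cs) = (\<Union>K \<in> P. K)"
    unfolding run_walk_codes cs_def set_map image_comp ks(1)
    by (rule SUP_cong) (simp_all add: c split_def)
  moreover have "(\<Union>K \<in> P. K) = S"
    using Union_quotient[OF equiv] by (simp add: P_def quotient_rtrancl_edges_on)
  moreover have "length (map fst cs) = card P"
    using distinct_card[OF ks(2)] ks(1) by (simp add: cs_def)
  moreover have "set (map fst cs) \<subseteq> S"
    using c ks(1) by (auto simp: cs_def)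
  moreover have "set (walk_codes cs) \<subseteq> instrs D"
    using c ks(1) by (intro set_walk_codes_subset) (auto simp: cs_def split_def)
  ultimately show ?thesis
    unfolding P_def by (metis count_Jump_walk_codes length_map)
qed

lemma card_sets_with_few_components:
  fixes V :: "'a set" and D :: "'b set"
  assumes fin: "finite V" "finite D" and "x0 \<in> V" and sym: "\<And>x y. E x y \<Longrightarrow> E y x"
    and step: "\<And>x y. x \<in> V \<Longrightarrow> y \<in> V \<Longrightarrow> E x y \<Longrightarrow> \<exists>b \<in> D. nb x b = y"
  shows "card {S. S \<subseteq> V \<and> card S = k \<and> card (S // (edges_on S E)\<^sup>*) \<le> L}
           \<le> card V ^ L * (card D + 2) ^ (2 * k)"
proof -
  define RS where "RS = {rs. set rs \<subseteq> V \<and> length rs = L}"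
  define IS where "IS = {is. set is \<subseteq> instrs D \<and> length is = 2 * k}"
  have "{S. S \<subseteq> V \<and> card S = k \<and> card (S // (edges_on S E)\<^sup>*) \<le> L}
          \<subseteq> (\<lambda>(rs, is). run nb x0 rs is) ` (RS \<times> IS)"
  proof
    fix S assume "S \<in> {S. S \<subseteq> V \<and> card S = k \<and> card (S // (edges_on S E)\<^sup>*) \<le> L}"
    then have S: "S \<subseteq> V" "card S = k" "card (S // (edges_on S E)\<^sup>*) \<le> L" by auto
    have step_S: "\<exists>b \<in> D. nb x b = y" if "x \<in> S" "y \<in> S" "E x y" for x y
      using S(1) that step by blast
    obtain rs "is" where code: "length rs = card (S // (edges_on S E)\<^sup>*)"
        "count_list is Jump = length rs" "length is \<le> 2 * card S" "set rs \<subseteq> S"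
        "set is \<subseteq> instrs D" "run nb x0 rs is = S"
      using set_code_exists[of S E D nb x0, OF finite_subset[OF S(1) fin(1)] sym step_S] by blast
    define rs' where "rs' = rs @ replicate (L - length rs) x0"
    define is' where "is' = is @ replicate (2 * k - length is) Skip"
    have "run nb x0 rs' is' = S"
      using code by (simp add: rs'_def is'_def run_append_Skips run_append_roots)
    moreover have "rs' \<in> RS" using code S \<open>x0 \<in> V\<close> by (auto simp: RS_def rs'_def)
    moreover have "is' \<in> IS" using code S(2) by (auto simp: IS_def is'_def instrs_def)
    ultimately show "S \<in> (\<lambda>(rs, is). run nb x0 rs is) ` (RS \<times> IS)" by force
  qed
  moreover have "finite RS" "finite IS"
    using fin by (simp_all add: RS_def IS_def finite_lists_length_eq finite_instrs)
  ultimately have "card {S. S \<subseteq> V \<and> card S = k \<and> card (S // (edges_on S E)\<^sup>*) \<le> L}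
                     \<le> card ((\<lambda>(rs, is). run nb x0 rs is) ` (RS \<times> IS))"
    by (intro card_mono) auto
  also have "\<dots> \<le> card (RS \<times> IS)"
    using \<open>finite RS\<close> \<open>finite IS\<close> by (intro card_image_le) auto
  also have "\<dots> = card V ^ L * (card D + 2) ^ (2 * k)"
    using fin by (simp add: RS_def IS_def card_cartesian_product card_lists_length_eq
        finite_instrs card_instrs)
  finally show ?thesis .
qed

(* A direction entry c \<in> {0, 1, 2} moves the coordinate by c - 1 modulo N. *)
definition torus_step :: "nat \<Rightarrow> nat list \<Rightarrow> nat list \<Rightarrow> nat list" where
  "torus_step N x e = map2 (\<lambda>a c. (a + c + N - 1) mod N) x e"

definition torus_directions :: "nat \<Rightarrow> nat list set" where
  "torus_directions d = {e. set e \<subseteq> {..<3} \<and> length e = d}"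

lemma cyc_dist_le_1_step:
  assumes "a < N" "b < N" "cyc_dist N a b \<le> 1"
  shows "\<exists>c < 3. (a + c + N - 1) mod N = b"
proof (cases "a \<le> b")
  case True
  then have "b - a \<le> 1 \<or> N - (b - a) \<le> 1"
    using assms(3) by (simp add: cyc_dist_def min_le_iff_disj)
  then have "b = a \<or> b = a + 1 \<or> (a = 0 \<and> b = N - 1)"
    using True assms(2) by (elim disjE) linarith+
  then show ?thesis
  proof (elim disjE conjE)
    assume "b = a"
    then show ?thesis using assms by (intro exI[of _ 1]) simp
  next
    assume "b = a + 1"
    then show ?thesis using assms by (intro exI[of _ 2]) (simp add: mod_if)
  next
    assume "a = 0" "b = N - 1"
    then show ?thesis using assms by (intro exI[of _ 0]) simp
  qed
next
  case False
  then have "a - b \<le> 1 \<or> N - (a - b) \<le> 1"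
    using assms(3) by (simp add: cyc_dist_def min_le_iff_disj)
  then have "a = b + 1 \<or> (b = 0 \<and> a = N - 1)"
    using False assms(1) by (elim disjE) linarith+
  then show ?thesis
  proof (elim disjE conjE)
    assume "a = b + 1"
    then show ?thesis using assms by (intro exI[of _ 0]) simp
  next
    assume "b = 0" "a = N - 1"
    then show ?thesis using assms by (intro exI[of _ 2]) simp
  qed
qed

lemma cyc_dist_commute: "cyc_dist N a b = cyc_dist N b a"
  by (auto simp: cyc_dist_def)

lemma star_adj_sym: "star_adj N d x y \<Longrightarrow> star_adj N d y x"
  by (auto simp: star_adj_def cyc_dist_commute)

lemma star_adj_torus_step:
  assumes "x \<in> torus N d" "y \<in> torus N d" "star_adj N d x y"
  shows "\<exists>e \<in> torus_directions d. torus_step N x e = y"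
proof -
  have "\<forall>i<d. \<exists>c<3. (x ! i + c + N - 1) mod N = y ! i"
    using assms cyc_dist_le_1_step by (auto simp: torus_def star_adj_def)
  then obtain f where f: "\<And>i. i < d \<Longrightarrow> f i < 3 \<and> (x ! i + f i + N - 1) mod N = y ! i"
    by metis
  show ?thesis
    using f assms(1,2)
    by (intro bexI[of _ "map f [0..<d]"])
       (auto simp: torus_step_def torus_directions_def torus_def intro!: nth_equalityI)
qed

lemma torus_eq_lists: "torus N d = {xs. set xs \<subseteq> {..<N} \<and> length xs = d}"
  by (auto simp: torus_def in_set_conv_nth) (meson lessThan_iff nth_mem subsetD)

lemma finite_torus: "finite (torus N d)"
  by (simp add: torus_eq_lists finite_lists_length_eq)

lemma card_torus: "card (torus N d) = N ^ d"
  by (simp add: torus_eq_lists card_lists_length_eq)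

lemma finite_torus_directions: "finite (torus_directions d)"
  by (simp add: torus_directions_def finite_lists_length_eq)

lemma card_torus_directions: "card (torus_directions d) = 3 ^ d"
  by (simp add: torus_directions_def card_lists_length_eq)

lemma card_torus_sets_with_few_components:
  assumes "N \<ge> 1"
  shows "card {S. S \<subseteq> torus N d \<and> card S = k \<and> card (star_components N d S) \<le> L}
           \<le> (N ^ d) ^ L * (3 ^ d + 2) ^ (2 * k)"
proof -
  have "replicate d 0 \<in> torus N d" using assms by (simp add: torus_def)
  from card_sets_with_few_components[where V = "torus N d" and D = "torus_directions d"
      and E = "star_adj N d" and nb = "torus_step N",
      OF finite_torus finite_torus_directions this star_adj_sym star_adj_torus_step]
  show ?thesis
    by (simp add: star_components_def edges_on_def card_torus card_torus_directions)
qed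

lemma power_nat_floor_div_ln_le:
  fixes x t :: real
  assumes "1 < x" "0 \<le> t"
  shows "x ^ nat \<lfloor>t / ln x\<rfloor> \<le> exp t"
proof -
  define m where "m = nat \<lfloor>t / ln x\<rfloor>"
  have "real m * ln x \<le> t"
    using assms by (simp add: m_def pos_le_divide_eq[symmetric] ln_gt_zero)
  have "x ^ m = exp (real m * ln x)"
    using assms by (simp add: exp_of_nat_mult)
  also have "\<dots> \<le> exp t" using \<open>real m * ln x \<le> t\<close> by simp
  finally show ?thesis unfolding m_def .
qed

theorem claim3p4:
  fixes d :: nat
  assumes "d \<ge> 2"
  shows "\<exists>C::real. \<forall>n::nat. \<forall>k::nat. \<forall>N::nat.
           n \<ge> 2 \<longrightarrow> N \<ge> 1 \<longrightarrow> N ^ d \<le> n \<longrightarrow>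
           real (card {S. S \<subseteq> torus N d \<and> card S = k \<and>
                        real (card (star_components N d S)) \<le> real k / ln (real n)})
             \<le> C ^ k"
proof (intro exI allI impI)
  fix n k N :: nat
  assume n: "n \<ge> 2" and N: "N \<ge> 1" and "N ^ d \<le> n"
  define L where "L = nat \<lfloor>real k / ln (real n)\<rfloor>"
  have "ln (real n) > 0" using n by simp
  then have few_iff: "real c \<le> real k / ln (real n) \<longleftrightarrow> c \<le> L" for c :: nat
    unfolding L_def by (auto simp: le_nat_floor le_nat_iff le_floor_iff)
  have "real (card {S. S \<subseteq> torus N d \<and> card S = k \<and>
                      real (card (star_components N d S)) \<le> real k / ln (real n)})
          = real (card {S. S \<subseteq> torus N d \<and> card S = k \<and> card (star_components N d S) \<le> L})"
    (is "real (card ?A) = _") by (simp add: few_iff)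
  also have "\<dots> \<le> real ((N ^ d) ^ L * (3 ^ d + 2) ^ (2 * k))"
    using card_torus_sets_with_few_components[OF N] by (rule of_nat_mono)
  also have "\<dots> = real (N ^ d) ^ L * ((3 ^ d + 2) ^ 2) ^ k"
    by (simp add: power_mult add.commute)
  also have "\<dots> \<le> real n ^ L * ((3 ^ d + 2) ^ 2) ^ k"
    using \<open>N ^ d \<le> n\<close> by (intro mult_right_mono power_mono) auto
  also have "\<dots> \<le> exp (real k) * ((3 ^ d + 2) ^ 2) ^ k"
    unfolding L_def using n by (intro mult_right_mono power_nat_floor_div_ln_le) auto
  also have "\<dots> = (exp 1 * (3 ^ d + 2) ^ 2) ^ k"
    by (simp add: power_mult_distrib flip: exp_of_nat_mult)
  finally show "real (card ?A) \<le> (exp 1 * (3 ^ d + 2) ^ 2) ^ k" .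
qed

end
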